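(* Every element of $\widehat{\Pi}_{3/3,3}$ can be written as \[ \psi_a(z)=\frac{\frac16\left(-6a^3+18a^2-9a+1\right)z^3+\frac12\left(6a^2-6a+1\right)z^2+(1-3a)z+1}{(1-az)^3},\qquad a\in\mathbb{R}. \] Then $\widehat{R}_{3/3,3}=2+\sqrt8$. This value is attained for $a=\frac{2-\sqrt2}{4}$, and $R(\psi_a)<2+\sqrt8$ for every other $a\in\mathbb{R}$.
   Context: A real rational function $\psi$ is always considered in lowest terms, as a smooth function on $\mathbb{R}$ minus its finitely many poles. It is absolutely monotonic at $x\in\mathbb{R}$ if $x$ is not a pole and $\psi^{(k)}(x)\ge 0$ for all integers $k\ge 0$. The radius of absolute monotonicity is $R(\psi)=\sup\big(\{r\in[0,\infty): \psi \text{ is absolutely monotonic at each point of } [-r,0]\}\cup\{0\}\big)\in[0,+\infty]$. $\widehat{\Pi}_{s/s,p}$ denotes the set of real rational functions $\psi(z)=P(z)/(1-az)^s$ with $P$ a real polynomial of degree at most $s$ and $a\in\mathbb{R}$, such that $\psi(z)-e^z=O(z^{p+1})$ as $z\to0$. Finally, $\widehat{R}_{s/s,p}=\sup\{R(\psi):\psi\in\widehat{\Pi}_{s/s,p}\}$. *)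

theory Defs
  imports "HOL-Analysis.Analysis" "HOL-Computational_Algebra.Polynomial" "HOL-Computational_Algebra.Polynomial_Factorial" "HOL-Computational_Algebra.Field_as_Ring"
    "HOL-Library.Landau_Symbols" "HOL-Library.Extended_Real"
begin

text \<open>A real rational function given by numerator p and denominator q (q nonzero),
  always taken in lowest terms: numerator and denominator are divided by their gcd.\<close>
definition lt_num :: "real poly \<Rightarrow> real poly \<Rightarrow> real poly" where
  "lt_num p q = p div gcd p q"
definition lt_den :: "real poly \<Rightarrow> real poly \<Rightarrow> real poly" where
  "lt_den p q = q div gcd p q"

definition rat_fun :: "real poly \<Rightarrow> real poly \<Rightarrow> real \<Rightarrow> real" where
  "rat_fun p q x = poly (lt_num p q) x / poly (lt_den p q) x"

definition is_pole :: "real poly \<Rightarrow> real poly \<Rightarrow> real \<Rightarrow> bool" where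
  "is_pole p q x \<longleftrightarrow> poly (lt_den p q) x = 0"

definition abs_mono_at :: "real poly \<Rightarrow> real poly \<Rightarrow> real \<Rightarrow> bool" where
  "abs_mono_at p q x \<longleftrightarrow> \<not> is_pole p q x \<and> (\<forall>k::nat. (deriv ^^ k) (rat_fun p q) x \<ge> 0)"

definition radius_am :: "real poly \<Rightarrow> real poly \<Rightarrow> ereal" where
  "radius_am p q = Sup (ereal ` ({r. r \<ge> 0 \<and> (\<forall>x\<in>{-r..0}. abs_mono_at p q x)} \<union> {0}))"

definition den :: "real \<Rightarrow> nat \<Rightarrow> real poly" where
  "den a s = [:1, -a:] ^ s"

text \<open>The class hat-Pi_{s/s,p}, as pairs (P, a) representing P(z)/(1-az)^s.\<close>
definition Pihat :: "nat \<Rightarrow> nat \<Rightarrow> (real poly \<times> real) set" where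
  "Pihat s p = {(P, a). degree P \<le> s \<and>
      (\<lambda>z. rat_fun P (den a s) z - exp z) \<in> O[at 0](\<lambda>z. z ^ (p + 1))}"

definition Rhat :: "nat \<Rightarrow> nat \<Rightarrow> ereal" where
  "Rhat s p = Sup ((\<lambda>(P, a). radius_am P (den a s)) ` Pihat s p)"

definition psi_num :: "real \<Rightarrow> real poly" where
  "psi_num a = [:1, 1 - 3*a, (6*a^2 - 6*a + 1) / 2, (-6*a^3 + 18*a^2 - 9*a + 1) / 6:]"

end

theory Submission
  imports Defs "HOL-Real_Asymp.Real_Asymp"
begin

text \<open>
  Comparing Taylor coefficients, \<open>P(z) - e\<^sup>z (1 - a z)\<^sup>3 = O(z\<^sup>4)\<close> pins down the cubic \<open>P\<close>, so
  the class consists of the \<open>\<psi>\<^sub>a\<close>. For \<open>a \<noteq> 0\<close> the partial fraction expansion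
  \<open>\<psi>\<^sub>a(z) = \<Sum>\<^sub>n\<^sub>\<le>\<^sub>3 c\<^sub>n (1 - a z)\<^sup>-\<^sup>n\<close> gives all derivatives in closed form, and in the
  variable \<open>t = 1/(1 - a z)\<close> the sign of the \<open>k\<close>-th derivative (\<open>a > 0\<close>) is the sign of a
  quadratic in \<open>t\<close>. As \<open>z\<close> runs over \<open>[-r, 0]\<close>, \<open>t\<close> runs over \<open>[1/(1 + a r), 1]\<close>.
  For \<open>a = (2 - \<surd>2)/4\<close> and \<open>r = 2 + \<surd>8\<close> the left end is \<open>t = 2 - \<surd>2\<close>, all the quadratics
  are nonnegative for \<open>t \<ge> 2 - \<surd>2\<close>, and the one for \<open>k = 2\<close> changes sign exactly there.
  For every other \<open>a\<close> some derivative is already negative at a point of \<open>(-r, 0]\<close>.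
\<close>

section \<open>Rational functions and the radius of absolute monotonicity\<close>

lemma rat_fun_eq_poly_div:
  assumes "poly q x \<noteq> 0"
  shows "rat_fun p q x = poly p x / poly q x"
proof -
  have p: "p = lt_num p q * gcd p q" and q: "q = lt_den p q * gcd p q"
    unfolding lt_num_def lt_den_def by simp_all
  have "poly q x = poly (lt_den p q) x * poly (gcd p q) x" by (subst q) simp
  with assms have "poly (gcd p q) x \<noteq> 0" by auto
  then show ?thesis
    unfolding rat_fun_def by (subst (2) p, subst (2) q) simp
qed

lemma not_is_pole:
  assumes "poly q x \<noteq> 0"
  shows "\<not> is_pole p q x"
proof -
  have "q = lt_den p q * gcd p q" unfolding lt_den_def by simp
  then have "poly q x = poly (lt_den p q) x * poly (gcd p q) x" by (metis poly_mult)
  with assms show ?thesis unfolding is_pole_def by auto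
qed

lemma radius_am_ge:
  assumes "0 \<le> r" "\<And>x. x \<in> {-r..0} \<Longrightarrow> abs_mono_at p q x"
  shows "ereal r \<le> radius_am p q"
  unfolding radius_am_def by (rule Sup_upper) (use assms in auto)

lemma radius_am_le:
  assumes "x \<le> 0" "\<not> abs_mono_at p q x"
  shows "radius_am p q \<le> ereal (-x)"
  unfolding radius_am_def
proof (rule Sup_least)
  fix y assume "y \<in> ereal ` ({r. 0 \<le> r \<and> (\<forall>x\<in>{-r..0}. abs_mono_at p q x)} \<union> {0})"
  then obtain r where y: "y = ereal r" and "r = 0 \<or> (\<forall>x\<in>{-r..0}. abs_mono_at p q x)"
    by auto
  then have "r \<le> -x" using assms by (cases "r = 0") (auto simp: not_le)
  then show "y \<le> ereal (-x)" using y by simp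
qed

lemma radius_am_less_if_eventually_not_abs_mono:
  assumes "0 < r" "x0 \<in> {-r..0}" "eventually (\<lambda>x. \<not> abs_mono_at p q x) (at x0)"
  shows "radius_am p q < ereal r"
proof -
  have "at x0 within {-r<..0} \<noteq> bot"
    using assms(1,2) by (simp add: trivial_limit_within islimpt_Ioc)
  moreover have "eventually (\<lambda>x. x \<in> {-r<..0} \<and> \<not> abs_mono_at p q x) (at x0 within {-r<..0})"
    using assms(3) unfolding eventually_at_filter by (rule eventually_mono) auto
  ultimately obtain x where "-r < x" "x \<le> 0" "\<not> abs_mono_at p q x"
    by (auto dest: eventually_happens')
  then have "radius_am p q \<le> ereal (-x)" by (intro radius_am_le)
  also have "\<dots> < ereal r" using \<open>-r < x\<close> by simp
  finally show ?thesis .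
qed

lemma radius_am_le_if_eventually_not_abs_mono_at_left:
  assumes "x0 \<le> 0" "eventually (\<lambda>x. \<not> abs_mono_at p q x) (at_left x0)"
  shows "radius_am p q \<le> ereal (-x0)"
proof (rule ereal_le_epsilon2)
  fix e :: real assume "0 < e"
  obtain b where "b < x0" and b: "\<And>x. b < x \<Longrightarrow> x < x0 \<Longrightarrow> \<not> abs_mono_at p q x"
    using assms(2) unfolding eventually_at_left_field by blast
  define x where "x = max (x0 - e) ((b + x0) / 2)"
  have "b < x" "x < x0" using \<open>b < x0\<close> \<open>0 < e\<close> by (auto simp: x_def less_max_iff_disj)
  then have "radius_am p q \<le> ereal (-x)" using assms(1) by (intro radius_am_le b) auto
  also have "\<dots> \<le> ereal (-x0) + ereal e" by (simp add: x_def)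
  finally show "radius_am p q \<le> ereal (-x0) + ereal e" .
qed

lemma funpow_deriv_eqI:
  assumes "open S" "x \<in> S"
    and "\<And>y. y \<in> S \<Longrightarrow> f y = g 0 y"
    and "\<And>k y. y \<in> S \<Longrightarrow> (g k has_real_derivative g (Suc k) y) (at y)"
  shows "(deriv ^^ k) f x = g k x"
  using assms(2)
proof (induction k arbitrary: x)
  case 0
  then show ?case using assms(3) by simp
next
  case (Suc k)
  have "eventually (\<lambda>y. (deriv ^^ k) f y = g k y) (nhds x)"
    using eventually_nhds_in_open[OF assms(1) Suc.prems] by (rule eventually_mono) (rule Suc.IH)
  then have "deriv ((deriv ^^ k) f) x = deriv (g k) x" by (rule deriv_cong_ev) simp
  also have "\<dots> = g (Suc k) x" using assms(4)[OF Suc.prems] by (rule DERIV_imp_deriv)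
  finally show ?case by simp
qed

lemma funpow_deriv_poly: "(deriv ^^ k) (poly p) = poly ((pderiv ^^ k) p)"
  for p :: "'a :: real_normed_field poly"
proof (induction k)
  case (Suc k)
  have "deriv (poly q) = poly (pderiv q)" for q :: "'a poly"
    by (rule ext) (rule DERIV_imp_deriv[OF poly_DERIV])
  then show ?case using Suc by simp
qed simp

lemma has_real_derivative_divide_linear_pow:
  fixes a x :: real
  assumes "1 - a*x \<noteq> 0"
  shows "((\<lambda>x. C / (1 - a*x)^m) has_real_derivative C * real m * a / (1 - a*x)^Suc m) (at x)"
proof (cases m)
  case (Suc j)
  define y where "y = 1 - a*x"
  have "y \<noteq> 0" using assms by (simp add: y_def)
  have "((\<lambda>x. C / (1 - a*x)^m) has_real_derivative
      - (C * (real m * y^(m - 1) * (0 - a))) / (y^m * y^m)) (at x)"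
    using assms unfolding y_def by (auto intro!: derivative_eq_intros)
  moreover have "- (C * (real m * y^(m - 1) * (0 - a))) / (y^m * y^m) = C * real m * a / y^Suc m"
    using \<open>y \<noteq> 0\<close> by (simp add: Suc field_simps)
  ultimately show ?thesis by (simp add: y_def)
qed simp

lemma has_real_derivative_inv_pow_sum:
  fixes a x :: real
  assumes "1 - a*x \<noteq> 0"
  shows "((\<lambda>x. \<Sum>n<N. c n * a^k * pochhammer (real n) k / (1 - a*x)^(n + k)) has_real_derivative
    (\<Sum>n<N. c n * a^Suc k * pochhammer (real n) (Suc k) / (1 - a*x)^(n + Suc k))) (at x)"
proof (rule DERIV_sum)
  fix n
  show "((\<lambda>x. c n * a^k * pochhammer (real n) k / (1 - a*x)^(n + k)) has_real_derivative
      c n * a^Suc k * pochhammer (real n) (Suc k) / (1 - a*x)^(n + Suc k)) (at x)"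
    using has_real_derivative_divide_linear_pow[OF assms, of "c n * a^k * pochhammer (real n) k" "n + k"]
    by (simp add: pochhammer_Suc algebra_simps)
qed

section \<open>Third-order approximations of the exponential\<close>

lemma poly_den: "poly (den a s) x = (1 - a*x)^s"
  by (simp add: den_def mult.commute)

lemma poly_psi_num: "poly (psi_num a) x = 1 + (1 - 3*a)*x + (6*a^2 - 6*a + 1)/2 * x^2
   + (-6*a^3 + 18*a^2 - 9*a + 1)/6 * x^3"
  by (simp add: psi_num_def algebra_simps power2_eq_square power3_eq_cube)

lemma tendsto_zero_if_bigo:
  fixes f g :: "'a \<Rightarrow> real"
  assumes "f \<in> O[F](g)" "(g \<longlongrightarrow> 0) F"
  shows "(f \<longlongrightarrow> 0) F"
proof -
  obtain c where "eventually (\<lambda>x. norm (f x) \<le> c * norm (g x)) F"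
    using landau_o.bigE[OF assms(1)] by blast
  moreover have "((\<lambda>x. c * norm (g x)) \<longlongrightarrow> 0) F"
    using tendsto_mult_right_zero[OF tendsto_norm_zero[OF assms(2)]] .
  ultimately show ?thesis by (rule Lim_null_comparison)
qed

lemma poly_eq_0_if_bigo_power:
  fixes D :: "real poly"
  assumes "degree D < n" "(\<lambda>z. poly D z) \<in> O[at 0](\<lambda>z. z^n)"
  shows "D = 0"
  using assms
proof (induction n arbitrary: D)
  case (Suc n)
  obtain d D' where D: "D = pCons d D'" by (cases D) auto
  have "((\<lambda>z::real. z^Suc n) \<longlongrightarrow> 0^Suc n) (at 0)"
    by (intro tendsto_intros)
  then have "((\<lambda>z::real. z^Suc n) \<longlongrightarrow> 0) (at 0)" by simp
  then have "((\<lambda>z. poly D z) \<longlongrightarrow> 0) (at 0)"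
    by (rule tendsto_zero_if_bigo[OF Suc.prems(2)])
  moreover have "((\<lambda>z. poly D z) \<longlongrightarrow> poly D 0) (at 0)"
    by (intro tendsto_intros)
  ultimately have "d = 0" using D tendsto_unique[OF at_neq_bot] by force
  have "eventually (\<lambda>z::real. z \<noteq> 0) (at 0)" by (simp add: eventually_at_filter)
  moreover have "(\<lambda>z. z * poly D' z) \<in> O[at 0](\<lambda>z. z * z^n)"
    using Suc.prems(2) D \<open>d = 0\<close> by simp
  ultimately have "(\<lambda>z. poly D' z) \<in> O[at 0](\<lambda>z. z^n)"
    by (subst (asm) landau_o.big.mult_cancel_left) auto
  then have "D' = 0"
    using Suc.IH Suc.prems(1) D by (cases "D' = 0") auto
  then show ?case using D \<open>d = 0\<close> by simp
qed simp

lemma bigo_mult_isCont: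
  fixes f g h :: "real \<Rightarrow> real"
  assumes "isCont g x" "f \<in> O[at x](h)"
  shows "(\<lambda>z. g z * f z) \<in> O[at x](h)"
proof -
  have "g \<in> O[at x](\<lambda>_. 1)"
    using assms(1) by (intro bigoI_tendsto[where c = "g x"]) (simp_all add: isCont_def)
  from landau_o.big.mult[OF this assms(2)] show ?thesis by simp
qed

lemma exp_minus_taylor_3: "(\<lambda>z::real. exp z - (1 + z + z^2/2 + z^3/6)) \<in> O[at 0](\<lambda>z. z^4)"
  by real_asymp

lemma eventually_den_nonzero_at_0: "eventually (\<lambda>z. 1 - a*z \<noteq> (0::real)) (at 0)"
proof -
  have "((\<lambda>z. 1 - a*z) \<longlongrightarrow> 1 - a*0) (at (0::real))" by (intro tendsto_intros)
  then show ?thesis by (rule tendsto_imp_eventually_ne) simp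
qed

lemma psi_approximates_exp:
  "(\<lambda>z. rat_fun (psi_num a) (den a 3) z - exp z) \<in> O[at 0](\<lambda>z. z^4)"
proof -
  define T where "T z = 1 + z + z^2/2 + z^3/6" for z :: real
  define R where "R z = (3*a^2/2 - a^3 - a/2) + (a^2/2 - a^3/2)*z - a^3/6*z^2" for z :: real
  have remainder: "T z * (1 - a*z)^3 - poly (psi_num a) z = z^4 * R z" for z
    unfolding poly_psi_num T_def R_def
    by (simp add: power2_eq_square power3_eq_cube power4_eq_xxxx algebra_simps divide_simps)
  have "(\<lambda>z. - (R z / (1 - a*z)^3) * z^4) \<in> O[at 0](\<lambda>z. z^4)"
    unfolding R_def by (intro bigo_mult_isCont continuous_intros) simp_all
  then have "(\<lambda>z. - (R z / (1 - a*z)^3) * z^4 - (exp z - T z)) \<in> O[at 0](\<lambda>z. z^4)"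
    using exp_minus_taylor_3 unfolding T_def by (rule sum_in_bigo(2))
  moreover have "eventually (\<lambda>z. - (R z / (1 - a*z)^3) * z^4 - (exp z - T z)
      = rat_fun (psi_num a) (den a 3) z - exp z) (at 0)"
    using eventually_den_nonzero_at_0[of a]
  proof eventually_elim
    case (elim z)
    then show ?case
      using remainder[of z] by (simp add: rat_fun_eq_poly_div poly_den field_simps)
  qed
  ultimately show ?thesis by (rule landau_o.big.in_cong[THEN iffD1, rotated])
qed

lemma degree_psi_num: "degree (psi_num a) \<le> 3"
  unfolding psi_num_def by (simp add: degree_pCons_eq_if)

lemma Pihat_3_3_iff: "(P, a) \<in> Pihat 3 3 \<longleftrightarrow> P = psi_num a"
proof
  assume "(P, a) \<in> Pihat 3 3"
  then have "degree P \<le> 3" and P_approx: "(\<lambda>z. rat_fun P (den a 3) z - exp z) \<in> O[at 0](\<lambda>z. z^4)"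
    by (simp_all add: Pihat_def)
  have "(\<lambda>z. (1 - a*z)^3 * ((rat_fun P (den a 3) z - exp z) - (rat_fun (psi_num a) (den a 3) z - exp z)))
      \<in> O[at 0](\<lambda>z. z^4)"
    by (intro bigo_mult_isCont continuous_intros sum_in_bigo(2) P_approx psi_approximates_exp)
  moreover have "eventually (\<lambda>z. (1 - a*z)^3 * ((rat_fun P (den a 3) z - exp z)
      - (rat_fun (psi_num a) (den a 3) z - exp z)) = poly (P - psi_num a) z) (at 0)"
    using eventually_den_nonzero_at_0[of a]
    by eventually_elim (simp add: rat_fun_eq_poly_div poly_den field_simps)
  ultimately have "(\<lambda>z. poly (P - psi_num a) z) \<in> O[at 0](\<lambda>z. z^4)"
    by (rule landau_o.big.in_cong[THEN iffD1, rotated])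
  moreover have "degree (P - psi_num a) < 4"
    using degree_diff_le[OF \<open>degree P \<le> 3\<close> degree_psi_num[of a]] by simp
  ultimately have "P - psi_num a = 0" by (intro poly_eq_0_if_bigo_power[of _ 4])
  then show "P = psi_num a" by simp
next
  assume "P = psi_num a"
  then show "(P, a) \<in> Pihat 3 3"
    using psi_approximates_exp degree_psi_num by (simp add: Pihat_def)
qed

section \<open>Derivatives of \<open>\<psi>\<^sub>a\<close>\<close>

definition psi_pf_coeff :: "real \<Rightarrow> nat \<Rightarrow> real" where
  "psi_pf_coeff a n = [6*a^3 - 18*a^2 + 9*a - 1, 3*(12*a^2 - 8*a + 1), 3*(-8*a^2 + 7*a - 1),
     6*a^2 - 6*a + 1] ! n / (6*a^3)"

lemma psi_partial_fractions:
  assumes "a \<noteq> 0" "1 - a*x \<noteq> 0"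
  shows "rat_fun (psi_num a) (den a 3) x = (\<Sum>n<4. psi_pf_coeff a n / (1 - a*x)^n)"
proof -
  define y where "y = 1 - a*x"
  have "y \<noteq> 0" using assms(2) by (simp add: y_def)
  have "6*a^3 * poly (psi_num a) x = (6*a^3 - 18*a^2 + 9*a - 1) * y^3 + 3*(12*a^2 - 8*a + 1) * y^2
      + 3*(-8*a^2 + 7*a - 1) * y + (6*a^2 - 6*a + 1)"
    unfolding poly_psi_num y_def by algebra
  also have "\<dots> = 6*a^3 * ((\<Sum>n<4. psi_pf_coeff a n / y^n) * y^3)"
    using assms(1) \<open>y \<noteq> 0\<close> unfolding psi_pf_coeff_def
    by (simp add: eval_nat_numeral field_simps)
  finally show ?thesis
    using assms by (simp add: rat_fun_eq_poly_div poly_den y_def)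
qed

lemma psi_higher_deriv_partial_fractions:
  assumes "a \<noteq> 0" "1 - a*x \<noteq> 0"
  shows "(deriv ^^ k) (rat_fun (psi_num a) (den a 3)) x
    = (\<Sum>n<4. psi_pf_coeff a n * a^k * pochhammer (real n) k / (1 - a*x)^(n + k))"
proof (rule funpow_deriv_eqI[where S = "{x. 1 - a*x \<noteq> 0}"])
  show "open {x. 1 - a*x \<noteq> (0::real)}" by (intro open_Collect_neq continuous_intros)
  show "\<And>k y. y \<in> {x. 1 - a*x \<noteq> 0} \<Longrightarrow> ((\<lambda>x. \<Sum>n<4. psi_pf_coeff a n * a^k * pochhammer (real n) k
      / (1 - a*x)^(n + k)) has_real_derivative
      (\<Sum>n<4. psi_pf_coeff a n * a^Suc k * pochhammer (real n) (Suc k) / (1 - a*y)^(n + Suc k))) (at y)"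
    by (rule has_real_derivative_inv_pow_sum) simp
qed (use assms in \<open>simp_all add: psi_partial_fractions\<close>)

definition psi_factor :: "real \<Rightarrow> real \<Rightarrow> real" where
  "psi_factor a t = (6*a^3 - 18*a^2 + 9*a - 1) + 3*(12*a^2 - 8*a + 1)*t + 3*(-8*a^2 + 7*a - 1)*t^2
     + (6*a^2 - 6*a + 1)*t^3"

definition psi_deriv_factor :: "real \<Rightarrow> nat \<Rightarrow> real \<Rightarrow> real" where
  "psi_deriv_factor a k t = (12*a^2 - 8*a + 1) + (-8*a^2 + 7*a - 1)*(real k + 1)*t
     + (6*a^2 - 6*a + 1)*((real k + 1)*(real k + 2)/6)*t^2"

lemma pochhammer_two: "pochhammer (2::real) k = fact k * (real k + 1)"
  by (induction k) (simp_all add: pochhammer_Suc algebra_simps)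

lemma pochhammer_three: "pochhammer (3::real) k = fact k * ((real k + 1) * (real k + 2) / 2)"
  by (induction k) (simp_all add: pochhammer_Suc algebra_simps add_divide_distrib)

lemma sum_lessThan_4: "(\<Sum>n<4. f n) = f 0 + f 1 + f 2 + f 3"
  for f :: "nat \<Rightarrow> 'a :: comm_monoid_add"
  by (simp add: eval_nat_numeral add.assoc)

lemma psi_eq_factor:
  assumes "a \<noteq> 0" "1 - a*x \<noteq> 0"
  defines "t \<equiv> 1 / (1 - a*x)"
  shows "rat_fun (psi_num a) (den a 3) x = psi_factor a t / (6*a^3)"
proof -
  have "rat_fun (psi_num a) (den a 3) x = (\<Sum>n<4. psi_pf_coeff a n * t^n)"
    using assms by (simp add: psi_partial_fractions power_one_over)
  also have "\<dots> = psi_factor a t / (6*a^3)"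
    using assms(1) unfolding sum_lessThan_4 psi_pf_coeff_def psi_factor_def
    by (simp add: field_simps) algebra
  finally show ?thesis .
qed

lemma psi_higher_deriv_eq_factor:
  assumes "a \<noteq> 0" "1 - a*x \<noteq> 0" "1 \<le> k"
  defines "t \<equiv> 1 / (1 - a*x)"
  shows "(deriv ^^ k) (rat_fun (psi_num a) (den a 3)) x
    = a^k * fact k / (2*a^3) * t^(k+1) * psi_deriv_factor a k t"
proof -
  have "(deriv ^^ k) (rat_fun (psi_num a) (den a 3)) x
      = (\<Sum>n<4. psi_pf_coeff a n * a^k * pochhammer (real n) k * t^(n + k))"
    using assms by (simp add: psi_higher_deriv_partial_fractions power_one_over)
  also have "\<dots> = a^k * fact k * t^(k+1) * (psi_pf_coeff a 1 + psi_pf_coeff a 2 * (real k + 1) * t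
      + psi_pf_coeff a 3 * ((real k + 1) * (real k + 2) / 2) * t^2)"
    using assms(3) unfolding sum_lessThan_4
    by (simp add: pochhammer_fact[symmetric] pochhammer_two pochhammer_three pochhammer_0_left
        power_add power2_eq_square power3_eq_cube algebra_simps)
  also have "psi_pf_coeff a 1 + psi_pf_coeff a 2 * (real k + 1) * t
      + psi_pf_coeff a 3 * ((real k + 1) * (real k + 2) / 2) * t^2 = psi_deriv_factor a k t / (2*a^3)"
    using assms(1) unfolding psi_pf_coeff_def psi_deriv_factor_def
    by (simp add: field_simps) algebra
  finally show ?thesis by simp
qed

lemma psi_abs_mono_at_iff:
  assumes "0 < a" "0 < 1 - a*x"
  defines "t \<equiv> 1 / (1 - a*x)"
  shows "abs_mono_at (psi_num a) (den a 3) x \<longleftrightarrow>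
    0 \<le> psi_factor a t \<and> (\<forall>k\<ge>1. 0 \<le> psi_deriv_factor a k t)"
proof -
  have "0 < t" using assms by simp
  have "0 \<le> (deriv ^^ k) (rat_fun (psi_num a) (den a 3)) x \<longleftrightarrow>
      (if k = 0 then 0 \<le> psi_factor a t else 0 \<le> psi_deriv_factor a k t)" for k
  proof (cases "k = 0")
    case True
    then show ?thesis
      using assms(1,2) \<open>0 < t\<close> by (simp add: psi_eq_factor t_def zero_le_divide_iff)
  next
    case False
    have "(deriv ^^ k) (rat_fun (psi_num a) (den a 3)) x
        = (a^k * fact k / (2*a^3) * t^(k+1)) * psi_deriv_factor a k t"
      using False assms(1,2) unfolding t_def by (simp add: psi_higher_deriv_eq_factor)
    moreover have "0 < a^k * fact k / (2*a^3) * t^(k+1)" using assms(1) \<open>0 < t\<close> by simp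
    ultimately show ?thesis using False by (metis mult_le_cancel_left_pos mult_zero_right)
  qed
  moreover have "\<not> is_pole (psi_num a) (den a 3) x"
    using assms(2) by (intro not_is_pole) (simp add: poly_den)
  ultimately show ?thesis
    unfolding abs_mono_at_def by (metis One_nat_def bot_nat_0.not_eq_extremum less_eq_Suc_le)
qed

lemma psi_radius_less:
  assumes "0 < a" "0 < r" "1 \<le> k" "1 / (1 + a*r) \<le> t" "t \<le> 1" "psi_deriv_factor a k t < 0"
  shows "radius_am (psi_num a) (den a 3) < ereal r"
proof -
  have "0 < 1 + a*r" using assms(1,2) by (simp add: add_pos_pos)
  then have "0 < t" using assms(4) by (metis divide_pos_pos order_less_le_trans zero_less_one)
  define x0 where "x0 = (1 - 1/t) / a"
  have t_x0: "1 - a*x0 = 1/t" using assms(1) by (simp add: x0_def)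
  have "x0 \<in> {-r..0}"
  proof -
    have "1 \<le> 1/t" "1/t \<le> 1 + a*r"
      using \<open>0 < 1 + a*r\<close> \<open>0 < t\<close> assms(4,5) by (simp_all add: divide_simps mult.commute)
    then have "-r * a \<le> 1 - 1/t" "1 - 1/t \<le> 0" by (simp_all add: algebra_simps)
    then show ?thesis using assms(1) by (simp add: x0_def le_divide_eq divide_le_0_iff)
  qed
  moreover have "eventually (\<lambda>x. \<not> abs_mono_at (psi_num a) (den a 3) x) (at x0)"
  proof -
    have "((\<lambda>x. 1 - a*x) \<longlongrightarrow> 1/t) (at x0)"
      unfolding t_x0[symmetric] by (intro tendsto_intros)
    then have lim: "((\<lambda>x. 1 / (1 - a*x)) \<longlongrightarrow> t) (at x0)"
      using tendsto_divide[OF tendsto_const[of 1]] \<open>0 < t\<close> by fastforce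
    have "isCont (psi_deriv_factor a k) t"
      unfolding psi_deriv_factor_def by (intro continuous_intros)
    then have "eventually (\<lambda>x. psi_deriv_factor a k (1 / (1 - a*x)) < 0) (at x0)"
      using isCont_tendsto_compose[OF _ lim] assms(6) by (intro order_tendstoD(2))
    moreover have "eventually (\<lambda>x. 0 < 1 / (1 - a*x)) (at x0)"
      using lim \<open>0 < t\<close> by (rule order_tendstoD(1))
    ultimately show ?thesis
    proof eventually_elim
      case (elim x)
      then show ?case
        using assms(3) by (auto simp: psi_abs_mono_at_iff[OF assms(1)] not_le zero_less_divide_iff)
    qed
  qed
  ultimately show ?thesis using assms(2) by (intro radius_am_less_if_eventually_not_abs_mono)
qed

section \<open>The optimal parameter\<close>

lemma sqrt_eight: "sqrt 8 = 2 * sqrt (2::real)"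
proof -
  have "sqrt (8::real) = sqrt (4 * 2)" by simp
  also have "\<dots> = sqrt 4 * sqrt 2" by (rule real_sqrt_mult)
  also have "sqrt (4::real) = 2" by (simp add: real_sqrt_unique)
  finally show ?thesis .
qed

lemma sqrt_two_less: "sqrt (2::real) < 14143/10000"
  by (rule real_less_lsqrt) (simp_all add: power2_eq_square)

lemma psi_factor_star:
  "psi_factor ((2 - sqrt 2)/4) t = (29/8 - 41 * sqrt 2 / 16) + (t - (2 - sqrt 2))^3 / 4"
proof -
  define s where "s = sqrt (2::real)"
  have s2: "s * (s * z) = 2 * z" for z :: real by (simp add: s_def flip: mult.assoc)
  show ?thesis unfolding psi_factor_def s_def[symmetric]
    by (simp add: field_simps power2_eq_square power3_eq_cube s2)
qed

lemma psi_deriv_factor_star: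
  "psi_deriv_factor ((2 - sqrt 2)/4) k t = (3 - 2 * sqrt 2)/2 * ((real k - 1) * (real k - 2))/6
     + (t - (2 - sqrt 2)) * ((sqrt 2 - 2)/4 * (real k + 1) + (real k + 1) * (real k + 2) * (t + (2 - sqrt 2))/24)"
proof -
  define s where "s = sqrt (2::real)"
  have s2: "s * (s * z) = 2 * z" for z :: real by (simp add: s_def flip: mult.assoc)
  show ?thesis unfolding psi_deriv_factor_def s_def[symmetric]
    by (simp add: field_simps power2_eq_square s2)
qed

lemma psi_factor_star_pos:
  assumes "2 - sqrt 2 \<le> t"
  shows "0 < psi_factor ((2 - sqrt 2)/4) t"
proof -
  have "41 * sqrt 2 < (58::real)"
    using sqrt_two_less by simp
  moreover have "0 \<le> (t - (2 - sqrt 2))^3" using assms by simp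
  ultimately show ?thesis unfolding psi_factor_star by linarith
qed

lemma psi_deriv_factor_star_nonneg:
  assumes "2 - sqrt 2 \<le> t" "1 \<le> k"
  shows "0 \<le> psi_deriv_factor ((2 - sqrt 2)/4) k t"
proof -
  define c where "c = 2 - sqrt (2::real)"
  have "0 < c" using sqrt_two_less by (simp add: c_def)
  have "0 \<le> (real k - 1) * (real k - 2)"
    by (cases "k \<le> 1") (use assms(2) in \<open>auto simp: le_Suc_eq\<close>)
  then have first: "0 \<le> (3 - 2 * sqrt 2)/2 * ((real k - 1) * (real k - 2))/6"
    using sqrt_two_less by simp
  have "3 * (2 * c) \<le> (real k + 2) * (t + c)"
    using assms \<open>0 < c\<close> by (intro mult_mono) (auto simp: c_def)
  then have "(real k + 1) * (3 * (2 * c)) \<le> (real k + 1) * ((real k + 2) * (t + c))"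
    by (rule mult_left_mono) simp
  then have "(real k + 1) * (c / 4) \<le> (real k + 1) * (real k + 2) * (t + c) / 24"
    by (simp add: field_simps)
  moreover have "(sqrt 2 - 2)/4 * (real k + 1) = - ((real k + 1) * (c / 4))"
    by (simp add: c_def field_simps)
  ultimately have "0 \<le> (sqrt 2 - 2)/4 * (real k + 1) + (real k + 1) * (real k + 2) * (t + c)/24"
    by linarith
  then have "0 \<le> (t - c) * ((sqrt 2 - 2)/4 * (real k + 1) + (real k + 1) * (real k + 2) * (t + c)/24)"
    using assms(1) by (simp add: c_def)
  with first show ?thesis unfolding psi_deriv_factor_star c_def by linarith
qed

lemma psi_deriv_factor_star_2:
  "psi_deriv_factor ((2 - sqrt 2)/4) 2 t = (t - (2 - sqrt 2)) * (t - (2 - sqrt 2)/2) / 2"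
  unfolding psi_deriv_factor_star by (simp add: field_simps)

lemma psi_star_edge: "1 / (1 + (2 - sqrt 2)/4 * (2 + sqrt 8)) = 2 - sqrt (2::real)"
proof -
  define s where "s = sqrt (2::real)"
  have s2: "s * (s * z) = 2 * z" for z :: real by (simp add: s_def flip: mult.assoc)
  have "0 \<le> s" "s * s = 2" by (simp_all add: s_def)
  then show ?thesis unfolding sqrt_eight s_def[symmetric]
    by (simp add: field_simps s2)
qed

lemma radius_psi_star:
  "radius_am (psi_num ((2 - sqrt 2)/4)) (den ((2 - sqrt 2)/4) 3) = ereal (2 + sqrt 8)"
proof -
  define a where "a = (2 - sqrt 2)/(4::real)"
  define r where "r = 2 + sqrt (8::real)"
  have "0 < a" using sqrt_two_less by (simp add: a_def)
  have "0 < r" by (simp add: r_def add_pos_nonneg)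
  have "0 < 1 + a*r" using mult_pos_pos[OF \<open>0 < a\<close> \<open>0 < r\<close>] by linarith
  have edge: "1 / (1 + a*r) = 2 - sqrt 2" unfolding a_def r_def by (rule psi_star_edge)
  have "ereal r \<le> radius_am (psi_num a) (den a 3)"
  proof (rule radius_am_ge)
    fix x assume "x \<in> {-r..0}"
    then have "a*x \<le> 0" "a*(-r) \<le> a*x"
      using \<open>0 < a\<close> by (simp add: mult_nonneg_nonpos, intro mult_left_mono) auto
    then have "0 < 1 - a*x" "1 - a*x \<le> 1 + a*r" by simp_all
    then have "2 - sqrt 2 \<le> 1 / (1 - a*x)"
      unfolding edge[symmetric] by (intro divide_left_mono) simp_all
    then show "abs_mono_at (psi_num a) (den a 3) x"
      using \<open>0 < 1 - a*x\<close> \<open>0 < a\<close>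
      by (simp add: psi_abs_mono_at_iff a_def psi_factor_star_pos psi_deriv_factor_star_nonneg less_imp_le)
  qed (use \<open>0 < r\<close> in simp)
  moreover have "radius_am (psi_num a) (den a 3) \<le> ereal r"
  proof (rule radius_am_le_if_eventually_not_abs_mono_at_left[of "-r", simplified])
    have "((\<lambda>x. 1 / (1 - a*x)) \<longlongrightarrow> 1 / (1 - a*(-r))) (at_left (-r))"
      using \<open>0 < 1 + a*r\<close> by (intro tendsto_intros) simp
    then have "eventually (\<lambda>x. (2 - sqrt 2)/2 < 1 / (1 - a*x)) (at_left (-r))"
      by (rule order_tendstoD(1)) (use edge sqrt_two_less in auto)
    moreover have "eventually (\<lambda>x. x < -r) (at_left (-r))"
      by (auto simp: eventually_at_left_field intro: exI[of _ "-r - 1"])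
    ultimately show "eventually (\<lambda>x. \<not> abs_mono_at (psi_num a) (den a 3) x) (at_left (-r))"
    proof eventually_elim
      case (elim x)
      then have "a * x < a * (-r)"
        using \<open>0 < a\<close> by (intro mult_strict_left_mono) auto
      then have "1 + a*r < 1 - a*x" by simp
      then have "1 / (1 - a*x) < 2 - sqrt 2"
        unfolding edge[symmetric] using \<open>0 < 1 + a*r\<close> by (intro divide_strict_left_mono) simp_all
      then have "psi_deriv_factor a 2 (1 / (1 - a*x)) < 0"
        using elim unfolding a_def psi_deriv_factor_star_2 by (simp add: mult_neg_pos)
      moreover have "0 < 1 - a*x" using \<open>0 < 1 + a*r\<close> \<open>1 + a*r < 1 - a*x\<close> by linarith
      ultimately show ?case
        using psi_abs_mono_at_iff[OF \<open>0 < a\<close>] by (metis not_le one_le_numeral)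
    qed
  qed (use \<open>0 < r\<close> in simp)
  ultimately show ?thesis unfolding a_def r_def by (rule antisym[rotated])
qed

section \<open>All other parameters\<close>

lemma psi_deriv_factor_inverse:
  assumes "y \<noteq> 0"
  shows "y^2 * psi_deriv_factor a k (1/y) = (12*a^2 - 8*a + 1)*y^2 + (-8*a^2 + 7*a - 1)*(real k + 1)*y
    + (6*a^2 - 6*a + 1)*((real k + 1)*(real k + 2)/6)"
  using assms unfolding psi_deriv_factor_def by (simp add: field_simps power2_eq_square)

lemma psi_deriv_factor_2_neg_below_star:
  assumes "0 < a" "a < (2 - sqrt 2)/4"
  shows "psi_deriv_factor a 2 (1 / (1 + a*(2 + sqrt 8))) < 0"
proof -
  define s where "s = sqrt (2::real)"
  have s2: "s * (s * z) = 2 * z" for z :: real by (simp add: s_def flip: mult.assoc)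
  define y where "y = 1 + a*(2 + 2* s)"
  define Q where "Q = (12 + 10* s) - (72 + 52* s)*a + (144 + 96* s)*a^2"
  have "0 < y" using assms(1) by (simp add: y_def s_def add_pos_pos)
  have "(72 + 52* s)*a < (72 + 52* s)*((2 - s)/4)"
    using assms(2) by (intro mult_strict_left_mono) (simp_all add: s_def add_pos_nonneg)
  also have "\<dots> = 10 + 8* s" by (simp add: algebra_simps s2) (simp add: field_simps)
  finally have "(72 + 52* s)*a < 10 + 8* s" .
  moreover have "0 \<le> (144 + 96* s)*a^2" "0 \<le> s" by (simp_all add: s_def)
  ultimately have "0 < Q" unfolding Q_def by linarith
  moreover have "a * (4*a - 2 + s) < 0"
    using assms by (simp add: s_def mult_pos_neg)
  ultimately have neg: "a * (4*a - 2 + s) * Q / 4 < 0"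
    by (simp add: mult_neg_pos)
  have "y^2 * psi_deriv_factor a 2 (1/y) = (12*a^2 - 8*a + 1)*y^2 + (-8*a^2 + 7*a - 1)*3*y
      + (6*a^2 - 6*a + 1)*2"
    using psi_deriv_factor_inverse[of y a 2] \<open>0 < y\<close> by simp
  then have "y^2 * psi_deriv_factor a 2 (1/y) = a * (4*a - 2 + s) * Q / 4"
    unfolding Q_def y_def by (simp add: algebra_simps power2_eq_square s2)
  with neg have "y^2 * psi_deriv_factor a 2 (1/y) < 0" by simp
  then show ?thesis
    using \<open>0 < y\<close> by (simp add: y_def s_def sqrt_eight mult_less_0_iff)
qed

lemma psi_deriv_factor_1_neg_above_star:
  assumes "(2 - sqrt 2)/4 < a" "a \<le> 7/20"
  shows "psi_deriv_factor a 1 (1 / (1 + a*(2 + sqrt 8))) < 0"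
proof -
  define s where "s = sqrt (2::real)"
  have s2: "s * (s * z) = 2 * z" for z :: real by (simp add: s_def flip: mult.assoc)
  have "0 < a" using assms(1) sqrt_two_less by simp
  define y where "y = 1 + a*(2 + 2* s)"
  have "0 < y" using \<open>0 < a\<close> by (simp add: y_def s_def add_pos_pos)
  have "(144 + 96* s)*a \<le> (144 + 96* s)*(7/20)"
    using assms(2) by (intro mult_left_mono) (simp_all add: s_def add_nonneg_nonneg)
  moreover have "(144 + 96* s)*(7/20) = 252/5 + 168/5 * s" by simp
  ultimately have "(144 + 96* s)*a - (56 + 36* s) < 0"
    using real_sqrt_ge_zero[of 2] unfolding s_def by linarith
  moreover have "0 < a^2 * (4*a - 2 + s)"
    using assms(1) \<open>0 < a\<close> by (simp add: s_def)
  ultimately have neg: "a^2 * (4*a - 2 + s) * ((144 + 96* s)*a - (56 + 36* s)) / 4 < 0"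
    by (simp add: mult_pos_neg)
  have "y^2 * psi_deriv_factor a 1 (1/y) = (12*a^2 - 8*a + 1)*y^2 + (-8*a^2 + 7*a - 1)*2*y
      + (6*a^2 - 6*a + 1)"
    using psi_deriv_factor_inverse[of y a 1] \<open>0 < y\<close> by simp
  then have "y^2 * psi_deriv_factor a 1 (1/y) = a^2 * (4*a - 2 + s) * ((144 + 96* s)*a - (56 + 36* s)) / 4"
    unfolding y_def by (simp add: algebra_simps power2_eq_square power3_eq_cube s2)
  with neg have "y^2 * psi_deriv_factor a 1 (1/y) < 0" by simp
  then show ?thesis
    using \<open>0 < y\<close> by (simp add: y_def s_def sqrt_eight mult_less_0_iff)
qed

lemma psi_deriv_factor_5_neg: "1/3 < a \<Longrightarrow> a < 1 \<Longrightarrow> psi_deriv_factor a 5 1 < 0"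
proof -
  assume "1/3 < a" "a < 1"
  then have "(3*a - 1) * (a - 1) < 0" by (simp add: mult_pos_neg)
  moreover have "psi_deriv_factor a 5 1 = 2 * ((3*a - 1) * (a - 1))"
    unfolding psi_deriv_factor_def by (simp add: algebra_simps power2_eq_square)
  ultimately show ?thesis by linarith
qed

lemma psi_deriv_factor_6_neg: "19/20 \<le> a \<Longrightarrow> a \<le> 3 \<Longrightarrow> psi_deriv_factor a 6 (7/10) < 0"
proof -
  assume "19/20 \<le> a" "a \<le> 3"
  define P where "P = (a - 19/20) * (a - 3)"
  have "P \<le> 0" using \<open>19/20 \<le> a\<close> \<open>a \<le> 3\<close> by (simp add: P_def mult_nonneg_nonpos)
  moreover have "psi_deriv_factor a 6 (7/10) = 6/25 * P - 24/125 * a - 4/375"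
    unfolding psi_deriv_factor_def P_def by (simp add: field_simps power2_eq_square)
  ultimately show ?thesis using \<open>19/20 \<le> a\<close> by linarith
qed

lemma psi_deriv_factor_3_neg: "2 \<le> a \<Longrightarrow> psi_deriv_factor a 3 (4/5) < 0"
proof -
  assume "2 \<le> a"
  then have "0 \<le> a * (a - 2)" by simp
  moreover have "psi_deriv_factor a 3 (4/5) = -(4/5) * (a * (a - 2)) - 1/15"
    unfolding psi_deriv_factor_def by (simp add: field_simps power2_eq_square)
  ultimately show ?thesis by simp
qed

lemma psi_not_abs_mono_at_0_if_neg:
  assumes "a < 0"
  shows "\<not> abs_mono_at (psi_num a) (den a 3) 0"
proof -
  have "psi_deriv_factor a 6 1 = 12*a^2 - 15*a + 10/3"
    unfolding psi_deriv_factor_def by (simp add: algebra_simps)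
  then have "0 < psi_deriv_factor a 6 1" using assms zero_le_power2[of a] by linarith
  moreover have "360 * a^3 < 0" using assms by (simp add: power3_eq_cube mult_neg_neg mult_pos_neg)
  ultimately have "360 * a^3 * psi_deriv_factor a 6 1 < 0" by (simp add: mult_neg_pos)
  moreover have "(deriv ^^ 6) (rat_fun (psi_num a) (den a 3)) 0 = 360 * a^3 * psi_deriv_factor a 6 1"
    using assms by (simp add: psi_higher_deriv_eq_factor fact_numeral field_simps)
  ultimately show ?thesis unfolding abs_mono_at_def by (metis not_le)
qed

lemma psi_zero_not_abs_mono_at: "\<not> abs_mono_at (psi_num 0) (den 0 3) (-3/2)"
proof -
  have "rat_fun (psi_num 0) (den 0 3) = poly (psi_num 0)"
    by (simp add: fun_eq_iff rat_fun_eq_poly_div poly_den)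
  then have "(deriv ^^ 2) (rat_fun (psi_num 0) (den 0 3)) = poly ((pderiv ^^ 2) (psi_num 0))"
    by (simp only: funpow_deriv_poly)
  then have "(deriv ^^ 2) (rat_fun (psi_num 0) (den 0 3)) (-3/2) < 0"
    by (simp add: psi_num_def pderiv_pCons numeral_2_eq_2)
  then show ?thesis unfolding abs_mono_at_def by (meson not_le)
qed

lemma radius_psi_less_if_ne_star:
  assumes "a \<noteq> (2 - sqrt 2)/4"
  shows "radius_am (psi_num a) (den a 3) < ereal (2 + sqrt 8)"
proof -
  have r_pos: "0 < 2 + sqrt (8::real)" by (simp add: add_pos_nonneg)
  have edge: "1 / (1 + a*(2 + sqrt 8)) \<le> 1 / (1 + 2*a)" if "0 < a"
    using that by (intro divide_left_mono) (auto intro!: mult_left_mono simp: add_pos_nonneg)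
  have edge_le_1: "1 / (1 + a*(2 + sqrt 8)) \<le> 1" if "0 < a"
    using edge[OF that] that by (simp add: order_trans[where y = "1 / (1 + 2*a)"])
  have edge_le_third: "1 / (1 + a*(2 + sqrt 8)) \<le> 1/3" if "1 \<le> a"
    using edge that by (smt (verit) frac_le)
  consider "a < 0" | "a = 0" | "0 < a" "a < (2 - sqrt 2)/4" | "(2 - sqrt 2)/4 < a" "a \<le> 7/20"
    | "7/20 < a" "a < 1" | "1 \<le> a" "a \<le> 3" | "3 < a"
    using assms by linarith
  then show ?thesis
  proof cases
    case 1
    then have "radius_am (psi_num a) (den a 3) \<le> ereal (-0)"
      by (intro radius_am_le psi_not_abs_mono_at_0_if_neg) simp
    then show ?thesis using r_pos by (auto elim: le_less_trans)
  next
    case 2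
    have "radius_am (psi_num 0) (den 0 3) \<le> ereal (- (-3/2))"
      by (intro radius_am_le psi_zero_not_abs_mono_at) simp
    then show ?thesis unfolding 2
      by (rule le_less_trans) (simp add: add_pos_nonneg)
  next
    case 3
    from psi_radius_less[OF \<open>0 < a\<close> r_pos _ order_refl edge_le_1 psi_deriv_factor_2_neg_below_star[OF 3]]
    show ?thesis using 3 by simp
  next
    case 4
    then have "0 < a" using sqrt_two_less by simp
    from psi_radius_less[OF this r_pos _ order_refl edge_le_1[OF this] psi_deriv_factor_1_neg_above_star[OF 4]]
    show ?thesis by simp
  next
    case 5
    then have "0 < a" by simp
    from psi_radius_less[OF this r_pos _ edge_le_1[OF this] order_refl psi_deriv_factor_5_neg[of a]] 5
    show ?thesis by simp
  next
    case 6
    then have "1 / (1 + a*(2 + sqrt 8)) \<le> 7/10" using edge_le_third by fastforce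
    from psi_radius_less[OF _ r_pos _ this _ psi_deriv_factor_6_neg[OF _ 6(2)]] 6
    show ?thesis by simp
  next
    case 7
    then have "1 / (1 + a*(2 + sqrt 8)) \<le> 4/5" using edge_le_third by fastforce
    from psi_radius_less[OF _ r_pos _ this _ psi_deriv_factor_3_neg] 7
    show ?thesis by simp
  qed
qed

lemma Rhat_3_3: "Rhat 3 3 = ereal (2 + sqrt 8)"
proof (rule antisym)
  have "radius_am P (den a 3) \<le> ereal (2 + sqrt 8)" if "(P, a) \<in> Pihat 3 3" for P a
  proof (cases "a = (2 - sqrt 2)/4")
    case True
    then show ?thesis using that radius_psi_star unfolding True by (simp add: Pihat_3_3_iff)
  next
    case False
    then show ?thesis using that radius_psi_less_if_ne_star by (simp add: Pihat_3_3_iff less_imp_le)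
  qed
  then show "Rhat 3 3 \<le> ereal (2 + sqrt 8)"
    unfolding Rhat_def by (auto intro: Sup_least)
  have "((psi_num ((2 - sqrt 2)/4)), (2 - sqrt 2)/4) \<in> Pihat 3 3"
    by (simp add: Pihat_3_3_iff)
  then show "ereal (2 + sqrt 8) \<le> Rhat 3 3"
    unfolding Rhat_def radius_psi_star[symmetric] by (force intro: Sup_upper)
qed

theorem mainTheorem18:
  shows "(\<forall>P a. (P, a) \<in> Pihat 3 3 \<longrightarrow> P = psi_num a)
    \<and> Rhat 3 3 = ereal (2 + sqrt 8)
    \<and> radius_am (psi_num ((2 - sqrt 2) / 4)) (den ((2 - sqrt 2) / 4) 3) = ereal (2 + sqrt 8)
    \<and> (\<forall>a::real. a \<noteq> (2 - sqrt 2) / 4 \<longrightarrow> radius_am (psi_num a) (den a 3) < ereal (2 + sqrt 8))"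
  using Pihat_3_3_iff Rhat_3_3 radius_psi_star radius_psi_less_if_ne_star by blast

end
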